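(* The hereditary class property $\Sigma=$ "weakly sparse" — the set of hereditary classes $\mathscr C$ for which there is an integer $t$ such that no graph in $\mathscr C$ contains $K_{t,t}$ as a subgraph — is a decomposition horizon, i.e. $\Sigma^\ast=\Sigma$.
   Context: Graphs are finite and simple; $K_{t,t}$ is the complete bipartite graph with both parts of size $t$. A hereditary class is a class closed under isomorphism and induced subgraphs; a hereditary class property is a set $\Pi$ of hereditary classes closed under passing to hereditary subclasses. For non-decreasing $f:\mathbb N\to\mathbb N$ and positive integer $p$, $\mathscr C$ has an $f$-bounded $\Pi$-decomposition with parameter $p$ if there is $\mathscr D_p\in\Pi$ such that every $G\in\mathscr C$ has a partition $V_1,\dots,V_N$ of $V(G)$ with $N\le f(|G|)$ and $G[V_{i_1}\cup\dots\cup V_{i_p}]\in\mathscr D_p$ for all $i_1,\dots,i_p\in[N]$. $\Pi^\ast$ is the set of hereditary classes that, for every positive integer $p$, have such a decomposition for some non-decreasing $f$ with $f(n)=n^{o(1)}$. $\Pi$ is a decomposition horizon if $\Pi^\ast=\Pi$. *)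

theory Defs
  imports Complex_Main
begin

text \<open>Finite simple graphs, represented with vertices drawn from nat
 (every finite graph is isomorphic to such a graph).\<close>

type_synonym graph = "nat set \<times> nat set set"

definition verts :: "graph \<Rightarrow> nat set" where "verts G = fst G"
definition edges :: "graph \<Rightarrow> nat set set" where "edges G = snd G"

definition is_graph :: "graph \<Rightarrow> bool" where
  "is_graph G \<longleftrightarrow> finite (verts G) \<and>
     (\<forall>e\<in>edges G. \<exists>u v. u \<noteq> v \<and> u \<in> verts G \<and> v \<in> verts G \<and> e = {u, v})"

definition induced :: "graph \<Rightarrow> nat set \<Rightarrow> graph" where
  "induced G S = (S \<inter> verts G, {e \<in> edges G. e \<subseteq> S})"

definition isomorphic :: "graph \<Rightarrow> graph \<Rightarrow> bool" where
  "isomorphic G H \<longleftrightarrow> (\<exists>f. bij_betw f (verts G) (verts H) \<and>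
     (\<forall>u\<in>verts G. \<forall>v\<in>verts G. {u, v} \<in> edges G \<longleftrightarrow> {f u, f v} \<in> edges H))"

definition hereditary :: "graph set \<Rightarrow> bool" where
  "hereditary C \<longleftrightarrow> (\<forall>G\<in>C. is_graph G) \<and>
     (\<forall>G\<in>C. \<forall>H. is_graph H \<and> isomorphic G H \<longrightarrow> H \<in> C) \<and>
     (\<forall>G\<in>C. \<forall>S. S \<subseteq> verts G \<longrightarrow> induced G S \<in> C)"

definition class_property :: "graph set set \<Rightarrow> bool" where
  "class_property \<Pi> \<longleftrightarrow> (\<forall>C\<in>\<Pi>. hereditary C) \<and>
     (\<forall>C\<in>\<Pi>. \<forall>D. hereditary D \<and> D \<subseteq> C \<longrightarrow> D \<in> \<Pi>)"

text \<open>f-bounded \<Pi>-decomposition with parameter p. The parts V_1..V_N are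
 indexed by 0..N-1 (parts may be empty, which is harmless since N is only
 bounded from above); a choice i_1..i_p is a map from {0..<p} to {0..<N}.\<close>
definition has_decomposition ::
  "graph set set \<Rightarrow> (nat \<Rightarrow> nat) \<Rightarrow> nat \<Rightarrow> graph set \<Rightarrow> bool" where
  "has_decomposition \<Pi> f p C \<longleftrightarrow> (\<exists>D\<in>\<Pi>. \<forall>G\<in>C. \<exists>N P.
      N \<le> f (card (verts G)) \<and>
      (\<forall>i<N. \<forall>j<N. i \<noteq> j \<longrightarrow> P i \<inter> P j = {}) \<and>
      (\<Union>i<N. P i) = verts G \<and>
      (\<forall>s::nat \<Rightarrow> nat. (\<forall>k<p. s k < N) \<longrightarrow> induced G (\<Union>k<p. P (s k)) \<in> D))"

text \<open>f(n) = n^{o(1)}: for every \<epsilon> > 0, eventually f(n) \<le> n^\<epsilon>.\<close>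
definition subpolynomial :: "(nat \<Rightarrow> nat) \<Rightarrow> bool" where
  "subpolynomial f \<longleftrightarrow> (\<forall>\<epsilon>::real. \<epsilon> > 0 \<longrightarrow>
      (\<forall>\<^sub>F n in sequentially. real (f n) \<le> real n powr \<epsilon>))"

definition Pi_star :: "graph set set \<Rightarrow> graph set set" where
  "Pi_star \<Pi> = {C. hereditary C \<and> (\<forall>p::nat. p > 0 \<longrightarrow>
      (\<exists>f. mono f \<and> subpolynomial f \<and> has_decomposition \<Pi> f p C))}"

definition decomposition_horizon :: "graph set set \<Rightarrow> bool" where
  "decomposition_horizon \<Pi> \<longleftrightarrow> Pi_star \<Pi> = \<Pi>"

definition contains_Ktt :: "nat \<Rightarrow> graph \<Rightarrow> bool" where
  "contains_Ktt t G \<longleftrightarrow> (\<exists>A B. A \<subseteq> verts G \<and> B \<subseteq> verts G \<and> A \<inter> B = {} \<and>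
      card A = t \<and> card B = t \<and> (\<forall>a\<in>A. \<forall>b\<in>B. {a, b} \<in> edges G))"

definition weakly_sparse :: "graph set set" where
  "weakly_sparse = {C. hereditary C \<and> (\<exists>t. \<forall>G\<in>C. \<not> contains_Ktt t G)}"

end

theory Submission
  imports Defs
begin

text \<open>Every hereditary class trivially decomposes into a single part, so any
  property of hereditary classes is contained in its starred version.
  Conversely, let \<open>C\<close> have, for \<open>p = 2\<close>, decompositions into at most \<open>f(n)\<close> parts,
  \<open>f\<close> subpolynomial, such that any two parts induce a graph of a class without \<open>K\<^sub>t\<^sub>,\<^sub>t\<close>.
  Take \<open>m \<ge> t\<close> so large that \<open>f(4m\<^sup>2) \<le> 2m\<close>. If some graph of \<open>C\<close> contained
  \<open>K\<^sub>s\<^sub>,\<^sub>s\<close> with \<open>s = 2m\<^sup>2\<close>, decompose the \<open>4m\<^sup>2\<close> vertices of this biclique: by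
  pigeonhole each side has at least \<open>s/N \<ge> m \<ge> t\<close> vertices in a single part,
  and the union of these two parts induces a graph containing \<open>K\<^sub>t\<^sub>,\<^sub>t\<close>.\<close>

definition biclique :: "graph \<Rightarrow> nat set \<Rightarrow> nat set \<Rightarrow> bool" where
  "biclique G A B \<longleftrightarrow> A \<subseteq> verts G \<and> B \<subseteq> verts G \<and> A \<inter> B = {} \<and>
     (\<forall>a\<in>A. \<forall>b\<in>B. {a, b} \<in> edges G)"

lemma contains_Ktt_iff_biclique:
  "contains_Ktt t G \<longleftrightarrow> (\<exists>A B. biclique G A B \<and> card A = t \<and> card B = t)"
  unfolding contains_Ktt_def biclique_def by blast

lemma biclique_subset:
  "biclique G A B \<Longrightarrow> A' \<subseteq> A \<Longrightarrow> B' \<subseteq> B \<Longrightarrow> biclique G A' B'"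
  unfolding biclique_def by blast

lemma biclique_induced:
  "biclique G A B \<Longrightarrow> A \<union> B \<subseteq> S \<Longrightarrow> biclique (induced G S) A B"
  unfolding biclique_def induced_def verts_def edges_def by auto

lemma hereditary_finite_verts: "hereditary C \<Longrightarrow> G \<in> C \<Longrightarrow> finite (verts G)"
  unfolding hereditary_def is_graph_def by blast

lemma hereditary_induced: "hereditary C \<Longrightarrow> G \<in> C \<Longrightarrow> induced G S \<in> C"
proof -
  assume "hereditary C" "G \<in> C"
  then have "induced G (S \<inter> verts G) \<in> C"
    unfolding hereditary_def by blast
  moreover have "induced G (S \<inter> verts G) = induced G S"
    using \<open>hereditary C\<close> \<open>G \<in> C\<close> unfolding hereditary_def is_graph_def induced_def edges_def
    by fastforce
  ultimately show ?thesis by simp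
qed

lemma pigeonhole_card_Int:
  assumes "finite A" "A \<subseteq> (\<Union>i<N. P i)" "N > 0"
  shows "\<exists>i<N. card A \<le> N * card (A \<inter> P i)"
proof (rule ccontr)
  assume small: "\<not> ?thesis"
  have "card A \<le> (\<Sum>i<N. card (A \<inter> P i))"
  proof -
    have "A = (\<Union>i<N. A \<inter> P i)" using assms(2) by blast
    then show ?thesis by (metis card_UN_le finite_lessThan)
  qed
  then have "N * card A \<le> N * (\<Sum>i<N. card (A \<inter> P i))"
    by simp
  also have "\<dots> = (\<Sum>i<N. N * card (A \<inter> P i))"
    by (simp add: sum_distrib_left)
  also have "\<dots> < (\<Sum>i<N. card A)"
    using small assms(3) by (intro sum_strict_mono) auto
  finally show False by simp
qed

lemma obtain_subset_in_one_part:
  assumes "finite A" "A \<subseteq> (\<Union>i<N. P i)" "N > 0" "N * t \<le> card A"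
  obtains i A' where "i < N" "A' \<subseteq> A \<inter> P i" "card A' = t"
proof -
  obtain i where "i < N" and "card A \<le> N * card (A \<inter> P i)"
    using pigeonhole_card_Int assms(1-3) by blast
  with assms(4) have "N * t \<le> N * card (A \<inter> P i)" by linarith
  with assms(3) have "t \<le> card (A \<inter> P i)" by simp
  then show thesis using \<open>i < N\<close> obtain_subset_with_card_n that by metis
qed

lemma biclique_in_two_parts:
  assumes "biclique G A B" "finite A" "finite B" "card A = s" "card B = s" "s > 0"
    and cover: "A \<union> B \<subseteq> (\<Union>i<N. P i)" and "N * t \<le> s"
  shows "\<exists>i<N. \<exists>j<N. contains_Ktt t (induced G (P i \<union> P j))"
proof -
  have A_cover: "A \<subseteq> (\<Union>i<N. P i)" and B_cover: "B \<subseteq> (\<Union>i<N. P i)"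
    using cover by auto
  have "A \<noteq> {}" using assms(4,6) by auto
  with A_cover have "N > 0" by (cases N) auto
  obtain i A' where "i < N" "A' \<subseteq> A \<inter> P i" "card A' = t"
    using obtain_subset_in_one_part[OF assms(2) A_cover \<open>N > 0\<close>] assms(4,8) by auto
  obtain j B' where "j < N" "B' \<subseteq> B \<inter> P j" "card B' = t"
    using obtain_subset_in_one_part[OF assms(3) B_cover \<open>N > 0\<close>] assms(5,8) by auto
  have "biclique G A' B'"
    using biclique_subset[OF assms(1)] \<open>A' \<subseteq> A \<inter> P i\<close> \<open>B' \<subseteq> B \<inter> P j\<close> by blast
  then have "biclique (induced G (P i \<union> P j)) A' B'"
    using \<open>A' \<subseteq> A \<inter> P i\<close> \<open>B' \<subseteq> B \<inter> P j\<close> by (auto intro: biclique_induced)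
  then show ?thesis
    unfolding contains_Ktt_iff_biclique using \<open>i < N\<close> \<open>j < N\<close> \<open>card A' = t\<close> \<open>card B' = t\<close>
    by blast
qed

definition pair_decomposition :: "(nat \<Rightarrow> nat) \<Rightarrow> graph set \<Rightarrow> graph set \<Rightarrow> bool" where
  "pair_decomposition f D C \<longleftrightarrow> (\<forall>G\<in>C. \<exists>N P. N \<le> f (card (verts G)) \<and>
     (\<Union>i<N. P i) = verts G \<and> (\<forall>i<N. \<forall>j<N. induced G (P i \<union> P j) \<in> D))"

lemma has_decomposition_2_imp_pair_decomposition:
  assumes "has_decomposition \<Pi> f 2 C"
  obtains D where "D \<in> \<Pi>" "pair_decomposition f D C"
proof -
  from assms obtain D where "D \<in> \<Pi>" and dec: "\<forall>G\<in>C. \<exists>N P. N \<le> f (card (verts G)) \<and>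
      (\<forall>i<N. \<forall>j<N. i \<noteq> j \<longrightarrow> P i \<inter> P j = {}) \<and> (\<Union>i<N. P i) = verts G \<and>
      (\<forall>s::nat \<Rightarrow> nat. (\<forall>k<2. s k < N) \<longrightarrow> induced G (\<Union>k<2. P (s k)) \<in> D)"
    unfolding has_decomposition_def by (rule bexE)
  have "\<exists>N P. N \<le> f (card (verts G)) \<and> (\<Union>i<N. P i) = verts G \<and>
          (\<forall>i<N. \<forall>j<N. induced G (P i \<union> P j) \<in> D)" if "G \<in> C" for G
  proof -
    from dec[rule_format, OF that] obtain N P where "N \<le> f (card (verts G))" "(\<Union>i<N. P i) = verts G"
      and choice: "\<forall>s::nat \<Rightarrow> nat. (\<forall>k<2. s k < N) \<longrightarrow> induced G (\<Union>k<2. P (s k)) \<in> D"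
      by (elim exE conjE)
    moreover have "induced G (P i \<union> P j) \<in> D" if "i < N" "j < N" for i j
    proof -
      have "{..<2::nat} = {0, 1}" by auto
      then have "(\<Union>k<(2::nat). P (if k = 0 then i else j)) = P i \<union> P j" by simp
      moreover have "induced G (\<Union>k<(2::nat). P (if k = 0 then i else j)) \<in> D"
        using choice[rule_format, of "\<lambda>k. if k = 0 then i else j"] that by simp
      ultimately show ?thesis by simp
    qed
    ultimately show ?thesis by blast
  qed
  then have "pair_decomposition f D C"
    unfolding pair_decomposition_def by blast
  with \<open>D \<in> \<Pi>\<close> show thesis by (rule that)
qed

lemma pair_decomposition_excludes_Ktt:
  assumes "hereditary C" "pair_decomposition f D C" "\<forall>H\<in>D. \<not> contains_Ktt t H"
    and "f (4 * m * m) \<le> 2 * m" "t \<le> m" "0 < m" "G \<in> C"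
  shows "\<not> contains_Ktt (2 * m * m) G"
proof
  assume "contains_Ktt (2 * m * m) G"
  then obtain A B where AB: "biclique G A B" "card A = 2 * m * m" "card B = 2 * m * m"
    unfolding contains_Ktt_iff_biclique by blast
  then have "finite A" "finite B" "A \<inter> B = {}" "A \<union> B \<subseteq> verts G"
    using hereditary_finite_verts[OF \<open>hereditary C\<close> \<open>G \<in> C\<close>]
    unfolding biclique_def by (auto intro: finite_subset)
  define H where "H = induced G (A \<union> B)"
  have "H \<in> C" unfolding H_def using \<open>hereditary C\<close> \<open>G \<in> C\<close> by (rule hereditary_induced)
  have verts_H: "verts H = A \<union> B"
    using \<open>A \<union> B \<subseteq> verts G\<close> unfolding H_def induced_def verts_def by auto
  have "card (verts H) = 4 * m * m"
    using verts_H AB(2,3) \<open>finite A\<close> \<open>finite B\<close> \<open>A \<inter> B = {}\<close> by (simp add: card_Un_disjoint)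
  moreover obtain N P where "N \<le> f (card (verts H))" and cover: "(\<Union>i<N. P i) = verts H"
    and pairs: "\<forall>i<N. \<forall>j<N. induced H (P i \<union> P j) \<in> D"
    using assms(2)[unfolded pair_decomposition_def, rule_format, OF \<open>H \<in> C\<close>] by (elim exE conjE)
  ultimately have "N * t \<le> 2 * m * m"
    using mult_le_mono[of N "2 * m" t m] \<open>f (4 * m * m) \<le> 2 * m\<close> \<open>t \<le> m\<close> by simp
  moreover have "biclique H A B"
    unfolding H_def using AB(1) by (rule biclique_induced) simp
  moreover have "0 < 2 * m * m" using \<open>0 < m\<close> by simp
  moreover have "A \<union> B \<subseteq> (\<Union>i<N. P i)" using cover verts_H by simp
  ultimately have "\<exists>i<N. \<exists>j<N. contains_Ktt t (induced H (P i \<union> P j))"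
    using biclique_in_two_parts \<open>finite A\<close> \<open>finite B\<close> AB(2,3) by blast
  then show False using pairs assms(3) by blast
qed

lemma subpolynomial_eventually_le_sqrt:
  assumes "subpolynomial f"
  shows "\<forall>\<^sub>F n in sequentially. real (f n) \<le> sqrt (real n)"
proof -
  have "(1/2 :: real) > 0" by simp
  then have "\<forall>\<^sub>F n in sequentially. real (f n) \<le> real n powr (1/2)"
    using assms unfolding subpolynomial_def by blast
  then show ?thesis by (simp add: powr_half_sqrt)
qed

lemma subpolynomial_const_one: "subpolynomial (\<lambda>_. 1)"
  unfolding subpolynomial_def eventually_sequentially
  by (metis ge_one_powr_ge_zero less_imp_le of_nat_1 of_nat_le_iff)

lemma has_decomposition_single_part:
  assumes "C \<in> \<Pi>" "hereditary C" "p > 0"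
  shows "has_decomposition \<Pi> (\<lambda>_. 1) p C"
  unfolding has_decomposition_def
proof (intro bexI[OF _ assms(1)] ballI exI[of _ 1] exI[of _ "\<lambda>_. verts _"] conjI allI impI)
  fix G and s :: "nat \<Rightarrow> nat"
  assume "G \<in> C"
  then show "induced G (\<Union>k<p. verts G) \<in> C"
    using assms(2) hereditary_induced by blast
qed auto

lemma subset_Pi_star:
  assumes "\<forall>C\<in>\<Pi>. hereditary C"
  shows "\<Pi> \<subseteq> Pi_star \<Pi>"
  unfolding Pi_star_def
  using assms has_decomposition_single_part subpolynomial_const_one
  by (fastforce intro: exI[of _ "\<lambda>_. 1"] simp: mono_def)

lemma weakly_sparse_class_property: "class_property weakly_sparse"
  unfolding class_property_def weakly_sparse_def by blast

lemma Pi_star_weakly_sparse_subset: "Pi_star weakly_sparse \<subseteq> weakly_sparse"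
proof
  fix C assume "C \<in> Pi_star weakly_sparse"
  then have "hereditary C"
    and decomposable: "\<forall>p>0. \<exists>f. mono f \<and> subpolynomial f \<and> has_decomposition weakly_sparse f p C"
    unfolding Pi_star_def by auto
  obtain f where "subpolynomial f" and "has_decomposition weakly_sparse f 2 C"
    using decomposable[rule_format, of 2] by auto
  obtain D where "D \<in> weakly_sparse" and "pair_decomposition f D C"
    by (rule has_decomposition_2_imp_pair_decomposition[OF \<open>has_decomposition weakly_sparse f 2 C\<close>])
  then obtain t where t: "\<forall>H\<in>D. \<not> contains_Ktt t H"
    unfolding weakly_sparse_def by blast
  obtain n0 where n0: "\<And>n. n \<ge> n0 \<Longrightarrow> real (f n) \<le> sqrt (real n)"
    using subpolynomial_eventually_le_sqrt[OF \<open>subpolynomial f\<close>]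
    unfolding eventually_sequentially by blast
  define m where "m = max t n0 + 1"
  have "t \<le> m" "0 < m" by (simp_all add: m_def)
  have "n0 \<le> 4 * m * m" by (simp add: m_def)
  then have "real (f (4 * m * m)) \<le> sqrt (real (4 * m * m))"
    by (rule n0)
  also have "\<dots> = 2 * real m"
    by (rule real_sqrt_unique) (simp_all add: power2_eq_square)
  finally have "f (4 * m * m) \<le> 2 * m" by linarith
  then have "\<forall>G\<in>C. \<not> contains_Ktt (2 * m * m) G"
    using pair_decomposition_excludes_Ktt[OF \<open>hereditary C\<close> \<open>pair_decomposition f D C\<close> t]
      \<open>t \<le> m\<close> \<open>0 < m\<close> by blast
  with \<open>hereditary C\<close> show "C \<in> weakly_sparse"
    unfolding weakly_sparse_def by blast
qed

theorem mainTheorem5: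
  shows "class_property weakly_sparse \<and> decomposition_horizon weakly_sparse"
proof
  show "class_property weakly_sparse" by (rule weakly_sparse_class_property)
  have "\<forall>C\<in>weakly_sparse. hereditary C" unfolding weakly_sparse_def by blast
  then show "decomposition_horizon weakly_sparse"
    unfolding decomposition_horizon_def
    using subset_Pi_star Pi_star_weakly_sparse_subset by blast
qed

end
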